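(* Let $\phi:\mathbb{N}\to\mathbb{N}$ satisfy $\phi(n)\to\infty$ as $n\to\infty$. Then there is no triple $(f,A,P)$, where $f$ assigns a binary string $f(C_n)$ of length at most $\log\log\log n-\phi(n)$ to the $n$-node oriented ring $C_n$ (for all sufficiently large $n$), $A$ is a deterministic exploration algorithm and $P$ is a polynomial, such that for every sufficiently large $n$ the agent executing $A$ with input $f(C_n)$, starting at a node of $C_n$, visits all nodes of $C_n$ and stops after at most $P(n)$ edge traversals. In particular, neither a map oracle nor an instance oracle giving advice of size at most $\log\log\log n-\phi(n)$ permits exploration of all $n$-node oriented rings in time polynomial in $n$.
   Context: Model: a graph is a simple connected undirected graph with $n$ nodes. Nodes are unlabeled; at each node of degree $d$ the incident edges carry distinct port numbers $0,\dots,d-1$. A mobile agent starts at some node. At each step, located at a node $u$ whose degree it knows, it chooses a port at $u$ and traverses the corresponding edge to a neighbor $w$; upon arrival it learns the port number of this edge at $w$ and the degree of $w$. The agent must visit all nodes and stop; the time is the number of edge traversals. A deterministic exploration algorithm receives as input a binary string (advice); the size of advice is its length. A map oracle assigns advice to each port-numbered graph; an instance oracle assigns advice to each pair (graph, starting node). An oriented ring is a cycle in which at every node the ports $0$ and $1$ are in clockwise order (so all nodes look identical). Logarithms are to base 2. *)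

theory Defs
  imports "HOL-Computational_Algebra.Polynomial"
begin

text \<open>
  Observations: after each traversal the agent records a triple
  (port taken, port of the edge at the arrival node, degree of the arrival node).
  A deterministic exploration algorithm is a function that, given the advice string,
  the degree of the starting node and the history of observations, either returns
  Some p (take port p) or None (stop).
\<close>

type_synonym obs = "nat \<times> nat \<times> nat"
type_synonym algorithm = "bool list \<Rightarrow> nat \<Rightarrow> obs list \<Rightarrow> nat option"

text \<open>
  The n-node oriented ring: nodes 0..n-1 in clockwise order; at node v, port 0 leads
  clockwise to (v+1) mod n, where the edge has port 1; port 1 leads counterclockwise to
  (v+n-1) mod n, where the edge has port 0. Every node has degree 2.
  ring_run A s n v k = (position, history) after k steps of A with advice s, starting at v.
\<close>

fun ring_run :: "algorithm \<Rightarrow> bool list \<Rightarrow> nat \<Rightarrow> nat \<Rightarrow> nat \<Rightarrow> nat \<times> obs list" where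
  "ring_run A s n v 0 = (v, [])"
| "ring_run A s n v (Suc k) =
     (let (u, h) = ring_run A s n v k in
      case A s 2 h of
        None \<Rightarrow> (u, h)
      | Some p \<Rightarrow> if p = 0 then ((u + 1) mod n, h @ [(0, 1, 2)])
                  else ((u + n - 1) mod n, h @ [(p, 0, 2)]))"

definition explores_ring_within ::
  "algorithm \<Rightarrow> bool list \<Rightarrow> nat \<Rightarrow> nat \<Rightarrow> real \<Rightarrow> bool" where
  "explores_ring_within A s n v T \<longleftrightarrow>
     (\<exists>t. real t \<le> T
        \<and> (\<forall>i<t. \<exists>p. A s 2 (snd (ring_run A s n v i)) = Some p \<and> p < 2)
        \<and> A s 2 (snd (ring_run A s n v t)) = None
        \<and> {fst (ring_run A s n v i) | i. i \<le> t} = {0..<n})"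

end

theory Submission
  imports Defs
begin

text \<open>
  All nodes of an oriented ring look alike, so the observations of the agent, and hence
  the time \<open>t\<close> at which it stops, depend only on the advice string and not on the size
  \<open>n\<close> of the ring. Exploring within time \<open>n^D\<close> forces \<open>n \<le> t + 1\<close> and \<open>t \<le> n^D\<close>, so one
  advice string serves only sizes in a window whose upper end is at most the \<open>D\<close>-th power
  of its lower end. Hence \<open>k\<close> advice strings serve no interval of sizes \<open>[a, N]\<close> with
  \<open>N \<ge> a^((D+1)^k)\<close>; that is, all sizes up to \<open>N\<close> need about \<open>log log N\<close> strings, whereas
  advice of length \<open>log log log N - \<phi>(N)\<close> provides only \<open>2^(1-\<phi>(N)) log log N\<close>.
\<close>

definition ring_history :: "algorithm \<Rightarrow> bool list \<Rightarrow> nat \<Rightarrow> obs list" where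
  "ring_history A s i = snd (ring_run A s 0 0 i)"

definition ring_stop_time :: "algorithm \<Rightarrow> bool list \<Rightarrow> nat" where
  "ring_stop_time A s = (LEAST i. A s 2 (ring_history A s i) = None)"

lemma snd_ring_run_eq_ring_history: "snd (ring_run A s n v i) = ring_history A s i"
  unfolding ring_history_def
  by (induction i) (auto simp: split_beta split: option.splits)

lemma explores_ring_within_mono:
  "explores_ring_within A s n v T \<Longrightarrow> T \<le> T' \<Longrightarrow> explores_ring_within A s n v T'"
  unfolding explores_ring_within_def by (meson order_trans)

lemma explores_ring_within_stop_time:
  assumes "explores_ring_within A s n v T"
  shows "n \<le> ring_stop_time A s + 1" and "real (ring_stop_time A s) \<le> T"
proof -
  obtain t where t_le: "real t \<le> T"
    and moving: "\<forall>i<t. \<exists>p. A s 2 (ring_history A s i) = Some p \<and> p < 2"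
    and stops: "A s 2 (ring_history A s t) = None"
    and visits: "{fst (ring_run A s n v i) | i. i \<le> t} = {0..<n}"
    using assms unfolding explores_ring_within_def snd_ring_run_eq_ring_history by blast
  have stop_time: "ring_stop_time A s = t"
    unfolding ring_stop_time_def
  proof (rule Least_equality)
    show "t \<le> i" if "A s 2 (ring_history A s i) = None" for i
      using moving that by (metis not_le option.distinct(1))
  qed (fact stops)
  have "{0..<n} = (\<lambda>i. fst (ring_run A s n v i)) ` {..t}"
    using visits by auto
  then have "card {0..<n} \<le> card {..t}"
    by (metis card_image_le finite_atMost)
  then show "n \<le> ring_stop_time A s + 1"
    using stop_time by simp
  show "real (ring_stop_time A s) \<le> T"
    using stop_time t_le by simp
qed

text \<open>
  The least size \<open>a\<close> must be served by some \<open>u \<le> a^D\<close>; this \<open>u\<close> serves no size beyond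
  \<open>u + 1 < a^(D+1)\<close>, so the remaining \<open>k - 1\<close> windows cover the sizes from \<open>a^(D+1)\<close> on.
\<close>
lemma power_windows_cover_bound:
  fixes U :: "nat set"
  assumes "finite U" "card U \<le> k" "2 \<le> a" "1 \<le> D"
    and "\<And>n. a \<le> n \<Longrightarrow> n \<le> N \<Longrightarrow> \<exists>u\<in>U. n \<le> u + 1 \<and> u \<le> n ^ D"
  shows "N < a ^ ((D + 1) ^ k)"
  using assms
proof (induction k arbitrary: U a)
  case 0
  then show ?case by force
next
  case (Suc k)
  show ?case
  proof (cases "N < a")
    case True
    moreover have "a \<le> a ^ ((D + 1) ^ Suc k)"
      using Suc.prems(3) by (simp add: self_le_power)
    ultimately show ?thesis by simp
  next
    case False
    then obtain u where u: "u \<in> U" "a \<le> u + 1" "u \<le> a ^ D"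
      using Suc.prems(5)[of a] by auto
    have "N < (u + 2) ^ ((D + 1) ^ k)"
    proof (rule Suc.IH)
      show "card (U - {u}) \<le> k"
        using Suc.prems(1,2) u(1) by simp
      show "\<exists>u'\<in>U - {u}. n \<le> u' + 1 \<and> u' \<le> n ^ D" if "u + 2 \<le> n" "n \<le> N" for n
        using Suc.prems(5)[of n] u(2) that by fastforce
    qed (use Suc.prems in auto)
    also have "u + 2 \<le> a ^ (D + 1)"
    proof -
      have "a \<le> a ^ D"
        using Suc.prems(3,4) by (simp add: self_le_power)
      then have "a ^ D + 2 \<le> a * a ^ D"
        using Suc.prems(3) mult_right_mono[of 2 a "a ^ D"] by linarith
      then show ?thesis
        using u(3) by simp
    qed
    then have "(u + 2) ^ ((D + 1) ^ k) \<le> (a ^ (D + 1)) ^ ((D + 1) ^ k)"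
      by (rule power_mono) simp
    also have "\<dots> = a ^ ((D + 1) ^ Suc k)"
      by (simp only: power_Suc power_mult)
    finally show ?thesis .
  qed
qed

lemma sum_powers_of_two_less: "(\<Sum>i\<le>m. (2::nat) ^ i) < 2 ^ Suc m"
  by (induction m) auto

lemma card_bool_lists_length_le_less: "card {xs :: bool list. length xs \<le> L} < 2 ^ Suc L"
  using card_lists_length_le[of "UNIV :: bool set" L] sum_powers_of_two_less[of L]
  by simp

lemma finite_bool_lists_length_le: "finite {xs :: bool list. length xs \<le> L}"
  using finite_lists_length_le[of "UNIV :: bool set" L] by simp

lemma short_advice_exploration_bound:
  assumes "2 \<le> a" "1 \<le> D"
    and "\<And>n. a \<le> n \<Longrightarrow> n \<le> N \<Longrightarrow>
           length (f n) \<le> L \<and> (\<exists>v<n. explores_ring_within A (f n) n v (real n ^ D))"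
  shows "N < a ^ ((D + 1) ^ 2 ^ Suc L)"
proof (rule power_windows_cover_bound)
  let ?U = "ring_stop_time A ` f ` {a..N}"
  have "f ` {a..N} \<subseteq> {xs. length xs \<le> L}"
    using assms(3) by auto
  then have "card (f ` {a..N}) \<le> card {xs :: bool list. length xs \<le> L}"
    by (rule card_mono[OF finite_bool_lists_length_le])
  moreover have "card ?U \<le> card (f ` {a..N})"
    by (intro card_image_le) simp
  ultimately show "card ?U \<le> 2 ^ Suc L"
    using card_bool_lists_length_le_less[of L] by linarith
  show "\<exists>u\<in>?U. n \<le> u + 1 \<and> u \<le> n ^ D" if n: "a \<le> n" "n \<le> N" for n
  proof -
    obtain v where "explores_ring_within A (f n) n v (real n ^ D)"
      using assms(3)[OF n] by blast
    from explores_ring_within_stop_time[OF this] have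
      "n \<le> ring_stop_time A (f n) + 1" "ring_stop_time A (f n) \<le> n ^ D"
      by (simp_all add: of_nat_le_iff[symmetric])
    then show ?thesis
      using n by (intro bexI[of _ "ring_stop_time A (f n)"]) auto
  qed
qed (use assms in auto)

lemma eventually_poly_le_power:
  fixes P :: "real poly"
  shows "\<forall>\<^sub>F n in sequentially. poly P (real n) \<le> real n ^ Suc (degree P)"
proof -
  define C where "C = (\<Sum>i\<le>degree P. \<bar>coeff P i\<bar>)"
  obtain n0 :: nat where n0: "max C 1 \<le> real n0"
    using real_arch_simple by blast
  have "poly P (real n) \<le> real n ^ Suc (degree P)" if "n0 \<le> n" for n
  proof -
    have n: "max C 1 \<le> real n"
      using n0 that of_nat_le_iff[of n0 n] by linarith
    have "poly P (real n) = (\<Sum>i\<le>degree P. coeff P i * real n ^ i)"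
      by (rule poly_altdef)
    also have "\<dots> \<le> (\<Sum>i\<le>degree P. \<bar>coeff P i\<bar> * real n ^ degree P)"
    proof (rule sum_mono)
      fix i assume "i \<in> {..degree P}"
      then have "real n ^ i \<le> real n ^ degree P"
        using n by (intro power_increasing) auto
      then show "coeff P i * real n ^ i \<le> \<bar>coeff P i\<bar> * real n ^ degree P"
        using n by (intro mult_mono) auto
    qed
    also have "\<dots> = C * real n ^ degree P"
      by (simp add: C_def sum_distrib_right)
    also have "\<dots> \<le> real n ^ Suc (degree P)"
      using n by (simp add: mult_right_mono)
    finally show ?thesis .
  qed
  then show ?thesis
    unfolding eventually_sequentially by blast
qed

lemma log2_log2_log2_le:
  assumes "16 \<le> n" "n \<le> 2 ^ 2 ^ 2 ^ Y"
  shows "log 2 (log 2 (log 2 (real n))) \<le> real Y"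
proof -
  have "log 2 16 \<le> log 2 (real n)"
    using assms(1) by simp
  moreover have "log 2 (16::real) = 4"
    using log2_of_power_eq[of 16 4] by simp
  ultimately have four_le: "4 \<le> log 2 (real n)" by simp
  have "log 2 (log 2 (real n)) \<le> log 2 (real (2 ^ 2 ^ Y))"
    using log2_of_power_le[of n "2 ^ 2 ^ Y"] assms four_le by (intro log_mono) auto
  also have "\<dots> = real (2 ^ Y)"
    using log2_of_power_eq[of "2 ^ 2 ^ Y" "2 ^ Y"] by simp
  finally have upper: "log 2 (log 2 (real n)) \<le> real (2 ^ Y)" .
  have "log 2 4 \<le> log 2 (log 2 (real n))"
    using four_le by simp
  moreover have "log 2 (4::real) = 2"
    using log2_of_power_eq[of 4 2] by simp
  ultimately have "2 \<le> log 2 (log 2 (real n))" by simp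
  then have "log 2 (log 2 (log 2 (real n))) \<le> log 2 (real (2 ^ Y))"
    using upper by (intro log_mono) auto
  also have "\<dots> = real Y"
    using log2_of_power_eq[of "2 ^ Y" Y] by simp
  finally show ?thesis .
qed

lemma power_tower_less:
  fixes a E j Y :: nat
  assumes "a < Y" "E + j < Y"
  shows "a ^ (E ^ 2 ^ j) < 2 ^ 2 ^ 2 ^ Y"
proof -
  have "E ^ 2 ^ j \<le> (2 ^ E) ^ 2 ^ j"
    by (intro power_mono) (simp_all add: less_imp_le)
  also have "\<dots> = 2 ^ (E * 2 ^ j)"
    by (simp add: power_mult)
  also have "\<dots> \<le> 2 ^ (2 ^ E * 2 ^ j)"
    by (intro power_increasing mult_right_mono) (simp_all add: less_imp_le)
  also have "\<dots> = 2 ^ 2 ^ (E + j)"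
    by (simp add: power_add)
  finally have E_pow: "E ^ 2 ^ j \<le> 2 ^ 2 ^ (E + j)" .
  have "a < 2 ^ (Y - 1)"
    using assms(1) less_exp[of "Y - 1"] by linarith
  moreover have "2 ^ (E + j) \<le> (2::nat) ^ (Y - 1)"
    using assms(2) by (intro power_increasing) auto
  moreover have "(2::nat) ^ (Y - 1) + 2 ^ (Y - 1) = 2 ^ Y"
    using assms(1) by (cases Y) auto
  ultimately have sum_less: "a + 2 ^ (E + j) < 2 ^ Y"
    by linarith
  have "a * E ^ 2 ^ j \<le> a * 2 ^ 2 ^ (E + j)"
    using E_pow by simp
  also have "\<dots> < 2 ^ a * 2 ^ 2 ^ (E + j)"
    using less_exp[of a] by simp
  also have "\<dots> = 2 ^ (a + 2 ^ (E + j))"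
    by (simp add: power_add)
  also have "\<dots> < 2 ^ 2 ^ Y"
    using sum_less by simp
  finally have exponent: "a * E ^ 2 ^ j < 2 ^ 2 ^ Y" .
  have "a ^ (E ^ 2 ^ j) \<le> (2 ^ a) ^ (E ^ 2 ^ j)"
    by (intro power_mono) (simp_all add: less_imp_le)
  also have "\<dots> = 2 ^ (a * E ^ 2 ^ j)"
    by (simp add: power_mult)
  also have "\<dots> < 2 ^ 2 ^ 2 ^ Y"
    using exponent by simp
  finally show ?thesis .
qed

theorem mainTheorem2:
  fixes \<phi> :: "nat \<Rightarrow> nat"
  assumes "filterlim \<phi> at_top at_top"
  shows "\<not> (\<exists>(f :: nat \<Rightarrow> bool list) (A :: algorithm) (P :: real poly).
            \<forall>\<^sub>F n in sequentially.
               real (length (f n)) \<le> log 2 (log 2 (log 2 (real n))) - real (\<phi> n)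
             \<and> (\<exists>v<n. explores_ring_within A (f n) n v (poly P (real n))))"
proof (intro notI, elim exE)
  fix f :: "nat \<Rightarrow> bool list" and A :: algorithm and P :: "real poly"
  assume advice: "\<forall>\<^sub>F n in sequentially.
               real (length (f n)) \<le> log 2 (log 2 (log 2 (real n))) - real (\<phi> n)
             \<and> (\<exists>v<n. explores_ring_within A (f n) n v (poly P (real n)))"
  define D where "D = Suc (degree P)"
  have "\<forall>\<^sub>F n in sequentially. 16 \<le> n \<and> D + 3 \<le> \<phi> n
      \<and> real (length (f n)) \<le> log 2 (log 2 (log 2 (real n))) - real (\<phi> n)
      \<and> (\<exists>v<n. explores_ring_within A (f n) n v (real n ^ D))"
    using eventually_ge_at_top[of 16] assms[unfolded filterlim_at_top, rule_format, of "D + 3"]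
      advice eventually_poly_le_power[of P]
    by eventually_elim (auto simp: D_def intro: explores_ring_within_mono)
  then obtain a where a: "\<And>n. a \<le> n \<Longrightarrow> 16 \<le> n \<and> D + 3 \<le> \<phi> n
      \<and> real (length (f n)) \<le> log 2 (log 2 (log 2 (real n))) - real (\<phi> n)
      \<and> (\<exists>v<n. explores_ring_within A (f n) n v (real n ^ D))"
    unfolding eventually_sequentially by blast
  define Y where "Y = a + D + 3"
  have "2 ^ 2 ^ 2 ^ Y < a ^ ((D + 1) ^ 2 ^ Suc a)"
  proof (rule short_advice_exploration_bound)
    show "2 \<le> a"
      using a[of a] by simp
    fix n assume n: "a \<le> n" "n \<le> 2 ^ 2 ^ 2 ^ Y"
    then have "log 2 (log 2 (log 2 (real n))) \<le> real Y"
      using a log2_log2_log2_le by blast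
    then show "length (f n) \<le> a \<and> (\<exists>v<n. explores_ring_within A (f n) n v (real n ^ D))"
      using a[OF n(1)] by (auto simp: Y_def)
  qed (simp add: D_def)
  moreover have "a ^ ((D + 1) ^ 2 ^ Suc a) < 2 ^ 2 ^ 2 ^ Y"
    by (rule power_tower_less) (simp_all add: Y_def)
  ultimately show False
    by simp
qed

end
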